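(* Let $X,Y_1,Y_2$ be Hilbert spaces and $\mathcal A_i:Y_i\to X$, $i=1,2$, bounded linear operators. Suppose $\xi\in\operatorname{ran}\mathcal A_1$ but $\xi\notin\operatorname{ran}\mathcal A_2$. For $\alpha>0$ let $$\eta_\alpha:=(\mathcal A_2\mathcal A_2^*+\alpha I)^{-1}[\xi],\qquad\xi_\alpha:=\frac{\eta_\alpha}{\langle\xi,\eta_\alpha\rangle^{3/4}}.$$ Then $\langle\xi,\eta_\alpha\rangle>0$, $\lim_{\alpha\to0+}\|\mathcal A_1^*[\xi_\alpha]\|=\infty$ and $\lim_{\alpha\to0+}\mathcal A_2^*[\xi_\alpha]=0$. *)

theory Defs
  imports "HOL-Analysis.Analysis"
begin

text \<open>eta_reg A xi alpha = (A A^* + alpha I)^{-1} xi, i.e. the unique solution eta of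
  A (A^* eta) + alpha eta = xi.\<close>
definition eta_reg :: "('y::real_inner \<Rightarrow> 'x::real_inner) \<Rightarrow> 'x \<Rightarrow> real \<Rightarrow> 'x" where
  "eta_reg A \<xi> \<alpha> = (THE \<eta>. A (adjoint A \<eta>) + \<alpha> *\<^sub>R \<eta> = \<xi>)"

definition xi_reg :: "('y::real_inner \<Rightarrow> 'x::real_inner) \<Rightarrow> 'x \<Rightarrow> real \<Rightarrow> 'x" where
  "xi_reg A \<xi> \<alpha> = eta_reg A \<xi> \<alpha> /\<^sub>R ((\<xi> \<bullet> eta_reg A \<xi> \<alpha>) powr (3/4))"

end

theory Submission
  imports Defs "HOL-Real_Asymp.Real_Asymp"
begin

text \<open>Write \<open>\<eta>\<^sub>\<alpha>\<close> for the solution of \<open>A A\<^sup>* \<eta> + \<alpha> \<eta> = \<xi>\<close> and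
  \<open>f(\<alpha>) = \<langle>\<xi>, \<eta>\<^sub>\<alpha>\<rangle> = \<parallel>A\<^sup>* \<eta>\<^sub>\<alpha>\<parallel>\<^sup>2 + \<alpha> \<parallel>\<eta>\<^sub>\<alpha>\<parallel>\<^sup>2\<close>.
  Comparing the equations for two parameters \<open>\<alpha> < \<beta>\<close> gives
  \<open>\<parallel>A\<^sup>* \<eta>\<^sub>\<alpha> - A\<^sup>* \<eta>\<^sub>\<beta>\<parallel>\<^sup>2 \<le> f(\<alpha>) - f(\<beta>)\<close>. So \<open>f\<close> decreases, and if it stayed bounded
  as \<open>\<alpha> \<rightarrow> 0+\<close>, the vectors \<open>A\<^sup>* \<eta>\<^sub>\<alpha>\<close> would converge to some \<open>z\<close> with
  \<open>A z = lim (\<xi> - \<alpha> \<eta>\<^sub>\<alpha>) = \<xi>\<close>; hence \<open>f(\<alpha>) \<rightarrow> \<infinity>\<close> when \<open>\<xi> \<notin> ran A\<close>.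
  The two limits follow from \<open>\<parallel>A\<^sub>2\<^sup>* \<eta>\<^sub>\<alpha>\<parallel> \<le> f\<^sup>1\<^sup>/\<^sup>2\<close> and, for \<open>\<xi> = A\<^sub>1 y\<close>, from
  \<open>f = \<langle>y, A\<^sub>1\<^sup>* \<eta>\<^sub>\<alpha>\<rangle> \<le> \<parallel>y\<parallel> \<parallel>A\<^sub>1\<^sup>* \<eta>\<^sub>\<alpha>\<parallel>\<close>.\<close>

section \<open>Lax--Milgram and adjoints in Hilbert spaces\<close>

lemma Cauchy_if_dist_sq_le_null:
  fixes x :: "nat \<Rightarrow> 'a::metric_space"
  assumes dist_le: "\<And>m n. m \<le> n \<Longrightarrow> (dist (x m) (x n))\<^sup>2 \<le> \<epsilon> m" and "\<epsilon> \<longlonglongrightarrow> 0"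
  shows "Cauchy x"
proof (rule metric_CauchyI)
  fix e :: real
  assume "e > 0"
  then obtain M where M: "\<And>m. m \<ge> M \<Longrightarrow> \<epsilon> m < e\<^sup>2"
    using order_tendstoD(2)[OF \<open>\<epsilon> \<longlonglongrightarrow> 0\<close>, of "e\<^sup>2"] by (auto simp: eventually_sequentially)
  have "dist (x m) (x n) < e" if "M \<le> m" "m \<le> n" for m n
    using dist_le[OF \<open>m \<le> n\<close>] M[OF \<open>M \<le> m\<close>] \<open>e > 0\<close>
    by (smt (verit) power_less_imp_less_base)
  then show "\<exists>M. \<forall>m\<ge>M. \<forall>n\<ge>M. dist (x m) (x n) < e"
    by (metis dist_commute nat_le_linear)
qed

lemma strongly_midpoint_convex_attains_min:
  fixes J :: "'a::{real_normed_vector,complete_space} \<Rightarrow> real"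
  assumes bdd: "bdd_below (range J)" and cont: "\<And>x. isCont J x" and "\<alpha> > 0"
    and convex: "\<And>x y. \<alpha> * (norm (x - y))\<^sup>2 \<le> 2 * J x + 2 * J y - 4 * J (midpoint x y)"
  shows "\<exists>x. \<forall>y. J x \<le> J y"
proof -
  define d where "d = Inf (range J)"
  have d_le: "d \<le> J x" for x
    using bdd by (simp add: d_def cInf_lower)
  have "\<exists>x. J x < d + 1 / real (Suc n)" for n
    using cInf_lessD[of "range J" "d + 1 / real (Suc n)"] by (auto simp: d_def)
  then obtain X where X: "\<And>n. J (X n) < d + 1 / real (Suc n)"
    by metis
  have "Cauchy X"
  proof (rule Cauchy_if_dist_sq_le_null)
    show "(dist (X m) (X n))\<^sup>2 \<le> 4 / real (Suc m) / \<alpha>" if "m \<le> n" for m n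
    proof -
      have "1 / real (Suc n) \<le> 1 / real (Suc m)"
        using that by (simp add: frac_le)
      then have "\<alpha> * (dist (X m) (X n))\<^sup>2 \<le> 4 / real (Suc m)"
        using convex[of "X m" "X n"] X[of m] X[of n] d_le[of "midpoint (X m) (X n)"]
        by (simp add: dist_norm)
      then show ?thesis
        using \<open>\<alpha> > 0\<close> by (simp add: pos_le_divide_eq mult_ac)
    qed
    show "(\<lambda>m. 4 / real (Suc m) / \<alpha>) \<longlonglongrightarrow> 0"
      using \<open>\<alpha> > 0\<close> by real_asymp
  qed
  then obtain x where "X \<longlonglongrightarrow> x"
    using Cauchy_convergent_iff convergent_def by blast
  then have "(\<lambda>n. J (X n)) \<longlonglongrightarrow> J x"
    using cont isCont_tendsto_compose by blast
  moreover have "(\<lambda>n. J (X n)) \<longlonglongrightarrow> d"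
  proof (rule tendsto_sandwich[of "\<lambda>n. d" _ _ "\<lambda>n. d + 1 / real (Suc n)"])
    show "\<forall>\<^sub>F n in sequentially. d \<le> J (X n)"
      using d_le by simp
    show "\<forall>\<^sub>F n in sequentially. J (X n) \<le> d + 1 / real (Suc n)"
      by (intro always_eventually allI less_imp_le X)
    show "(\<lambda>n. d + 1 / real (Suc n)) \<longlonglongrightarrow> d"
      by real_asymp
  qed simp
  ultimately have "J x = d"
    by (rule LIMSEQ_unique)
  then show ?thesis
    using d_le by auto
qed

lemma linear_coeff_zero_if_quadratic_nonneg:
  fixes c q :: real
  assumes nonneg: "\<And>t. 0 \<le> 2 * t * c + t\<^sup>2 * q" and "q \<ge> 0"
  shows "c = 0"
proof -
  define t where "t = - c / (q + 1)"
  have t: "t * (q + 1) = - c"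
    using \<open>q \<ge> 0\<close> by (simp add: t_def)
  have "0 \<le> (2 * t * c + t\<^sup>2 * q) * (q + 1)\<^sup>2"
    by (rule mult_nonneg_nonneg[OF nonneg]) simp
  also have "\<dots> = 2 * c * (q + 1) * (t * (q + 1)) + q * (t * (q + 1))\<^sup>2"
    by (simp add: algebra_simps power2_eq_square)
  also have "\<dots> = - c\<^sup>2 * (q + 2)"
    unfolding t by (simp add: algebra_simps power2_eq_square)
  finally show ?thesis
    using \<open>q \<ge> 0\<close> by (simp add: mult_le_0_iff)
qed

text \<open>Lax--Milgram for the coercive symmetric form \<open>\<langle>L \<eta>, L h\<rangle> + \<alpha> \<langle>\<eta>, h\<rangle>\<close>,
  by the Dirichlet principle: \<open>\<eta>\<close> minimises \<open>\<parallel>L x\<parallel>\<^sup>2 + \<alpha> \<parallel>x\<parallel>\<^sup>2 - 2 \<phi> x\<close>.\<close>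

lemma regularized_gram_form_representation:
  fixes L :: "'a::{real_inner,complete_space} \<Rightarrow> 'b::real_inner" and \<phi> :: "'a \<Rightarrow> real"
  assumes "bounded_linear L" and "bounded_linear \<phi>" and "\<alpha> > 0"
  shows "\<exists>\<eta>. \<forall>h. L \<eta> \<bullet> L h + \<alpha> * (\<eta> \<bullet> h) = \<phi> h"
proof -
  interpret L: bounded_linear L by fact
  interpret \<phi>: bounded_linear \<phi> by fact
  define J where "J x = L x \<bullet> L x + \<alpha> * (x \<bullet> x) - 2 * \<phi> x" for x
  obtain K where K: "\<And>x. norm (\<phi> x) \<le> norm x * K"
    using \<phi>.bounded by blast
  have "J x \<ge> - K\<^sup>2 / \<alpha>" for x
  proof -
    have "\<phi> x \<le> K * norm x"
      using K[of x] by (simp add: abs_le_iff mult.commute)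
    have "0 \<le> \<alpha> * (norm x - K / \<alpha>)\<^sup>2"
      using \<open>\<alpha> > 0\<close> by simp
    also have "\<dots> = \<alpha> * (x \<bullet> x) - 2 * K * norm x + K\<^sup>2 / \<alpha>"
      using \<open>\<alpha> > 0\<close> by (simp add: field_simps power2_eq_square flip: power2_norm_eq_inner)
    finally show ?thesis
      unfolding J_def using \<open>\<phi> x \<le> K * norm x\<close> inner_ge_zero[of "L x"] by linarith
  qed
  then have "bdd_below (range J)"
    by (intro bdd_belowI[of _ "- K\<^sup>2 / \<alpha>"]) auto
  moreover have "isCont J x" for x
    unfolding J_def by (intro continuous_intros L.continuous \<phi>.continuous)
  moreover have "\<alpha> * (norm (x - y))\<^sup>2 \<le> 2 * J x + 2 * J y - 4 * J (midpoint x y)" for x y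
  proof -
    have "2 * J x + 2 * J y - 4 * J (midpoint x y) = L (x - y) \<bullet> L (x - y) + \<alpha> * (norm (x - y))\<^sup>2"
      by (simp add: J_def midpoint_def L.diff L.add L.scaleR \<phi>.add \<phi>.scaleR power2_norm_eq_inner
          algebra_simps inner_commute)
    then show ?thesis
      by simp
  qed
  ultimately obtain \<eta> where min: "\<And>x. J \<eta> \<le> J x"
    using strongly_midpoint_convex_attains_min \<open>\<alpha> > 0\<close> by blast
  have "L \<eta> \<bullet> L h + \<alpha> * (\<eta> \<bullet> h) - \<phi> h = 0" for h
  proof (rule linear_coeff_zero_if_quadratic_nonneg)
    show "L h \<bullet> L h + \<alpha> * (h \<bullet> h) \<ge> 0"
      using \<open>\<alpha> > 0\<close> by simp
    have "J (\<eta> + t *\<^sub>R h) = J \<eta> + 2 * t * (L \<eta> \<bullet> L h + \<alpha> * (\<eta> \<bullet> h) - \<phi> h)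
        + t\<^sup>2 * (L h \<bullet> L h + \<alpha> * (h \<bullet> h))" for t
      by (simp add: J_def L.add L.scaleR \<phi>.add \<phi>.scaleR algebra_simps inner_commute
          power2_eq_square)
    then show "0 \<le> 2 * t * (L \<eta> \<bullet> L h + \<alpha> * (\<eta> \<bullet> h) - \<phi> h) + t\<^sup>2 * (L h \<bullet> L h + \<alpha> * (h \<bullet> h))"
      for t
      using min[of "\<eta> + t *\<^sub>R h"] by simp
  qed
  then show ?thesis
    by auto
qed

lemma riesz_representation:
  fixes \<phi> :: "'a::{real_inner,complete_space} \<Rightarrow> real"
  assumes "bounded_linear \<phi>"
  shows "\<exists>w. \<forall>h. \<phi> h = w \<bullet> h"
proof -
  obtain w where "\<forall>h. 0 \<bullet> 0 + 1 * (w \<bullet> h) = \<phi> h"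
    using regularized_gram_form_representation[OF bounded_linear_zero assms, of 1] by auto
  then have "\<forall>h. \<phi> h = w \<bullet> h"
    by simp
  then show ?thesis
    by blast
qed

text \<open>The library proves \<open>adjoint_works\<close> only for Euclidean spaces.\<close>

lemma adjoint_works_complete:
  fixes A :: "'a::{real_inner,complete_space} \<Rightarrow> 'b::real_inner"
  assumes "bounded_linear A"
  shows "x \<bullet> adjoint A y = A x \<bullet> y"
proof -
  have "\<exists>w. \<forall>x. A x \<bullet> y = w \<bullet> x" for y
    using riesz_representation bounded_linear_compose[OF bounded_linear_inner_left assms] by blast
  then have "\<exists>g. \<forall>x y. A x \<bullet> y = x \<bullet> g y"
    by (metis inner_commute)
  then have "\<forall>x y. A x \<bullet> y = x \<bullet> adjoint A y"
    unfolding adjoint_def by (rule someI_ex)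
  then show ?thesis
    by simp
qed

lemma bounded_linear_adjoint_complete:
  fixes A :: "'a::{real_inner,complete_space} \<Rightarrow> 'b::real_inner"
  assumes "bounded_linear A"
  shows "bounded_linear (adjoint A)"
proof -
  interpret A: bounded_linear A by fact
  obtain K where "K > 0" and K: "\<And>x. norm (A x) \<le> norm x * K"
    using A.pos_bounded by blast
  note adj = adjoint_works_complete[OF assms]
  show ?thesis
  proof (rule bounded_linear_intro[of _ K])
    show "adjoint A (a + b) = adjoint A a + adjoint A b" for a b
      by (rule vector_eq_ldot[THEN iffD1]) (simp add: adj inner_add_right)
    show "adjoint A (r *\<^sub>R a) = r *\<^sub>R adjoint A a" for r a
      by (rule vector_eq_ldot[THEN iffD1]) (simp add: adj)
    show "norm (adjoint A y) \<le> norm y * K" for y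
    proof -
      have "(norm (adjoint A y))\<^sup>2 = A (adjoint A y) \<bullet> y"
        by (simp add: adj power2_norm_eq_inner)
      also have "\<dots> \<le> norm (adjoint A y) * K * norm y"
        using norm_cauchy_schwarz K mult_right_mono norm_ge_zero order_trans by metis
      finally show ?thesis
        using \<open>K > 0\<close>
        by (cases "adjoint A y = 0") (auto simp: power2_eq_square mult.commute mult.left_commute)
    qed
  qed
qed

section \<open>The regularised solution\<close>

lemma eta_reg_eq:
  fixes A :: "'a::{real_inner,complete_space} \<Rightarrow> 'b::{real_inner,complete_space}"
  assumes "bounded_linear A" and "\<alpha> > 0"
  shows "A (adjoint A (eta_reg A \<xi> \<alpha>)) + \<alpha> *\<^sub>R eta_reg A \<xi> \<alpha> = \<xi>"
proof -
  interpret A: bounded_linear A by fact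
  have adjoint_bl: "bounded_linear (adjoint A)"
    using assms(1) by (rule bounded_linear_adjoint_complete)
  interpret A': bounded_linear "adjoint A" by fact
  note adj = adjoint_works_complete[OF assms(1)]
  have inner_normal:
    "(A (adjoint A \<eta>) + \<alpha> *\<^sub>R \<eta>) \<bullet> h = adjoint A \<eta> \<bullet> adjoint A h + \<alpha> * (\<eta> \<bullet> h)" for \<eta> h
    by (simp add: inner_add_left adj)
  have weak_iff: "A (adjoint A \<eta>) + \<alpha> *\<^sub>R \<eta> = \<xi> \<longleftrightarrow>
      (\<forall>h. adjoint A \<eta> \<bullet> adjoint A h + \<alpha> * (\<eta> \<bullet> h) = \<xi> \<bullet> h)" for \<eta>
    using vector_eq_rdot[of "A (adjoint A \<eta>) + \<alpha> *\<^sub>R \<eta>" \<xi>] by (simp add: inner_normal)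
  have "\<exists>\<eta>. A (adjoint A \<eta>) + \<alpha> *\<^sub>R \<eta> = \<xi>"
    unfolding weak_iff
    using regularized_gram_form_representation[OF adjoint_bl bounded_linear_inner_right \<open>\<alpha> > 0\<close>] .
  moreover have "\<eta> = \<eta>'"
    if "A (adjoint A \<eta>) + \<alpha> *\<^sub>R \<eta> = \<xi>" and "A (adjoint A \<eta>') + \<alpha> *\<^sub>R \<eta>' = \<xi>" for \<eta> \<eta>'
  proof -
    define d where "d = \<eta> - \<eta>'"
    have "A (adjoint A d) + \<alpha> *\<^sub>R d
        = (A (adjoint A \<eta>) + \<alpha> *\<^sub>R \<eta>) - (A (adjoint A \<eta>') + \<alpha> *\<^sub>R \<eta>')"
      by (simp add: d_def A.diff A'.diff algebra_simps)
    also have "\<dots> = 0"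
      using that by simp
    finally have "(norm (adjoint A d))\<^sup>2 + \<alpha> * (norm d)\<^sup>2 = 0"
      using inner_normal[of d d] by (simp add: power2_norm_eq_inner)
    then have "d = 0"
      using \<open>\<alpha> > 0\<close> by (simp add: add_nonneg_eq_0_iff)
    then show ?thesis
      by (simp add: d_def)
  qed
  ultimately have "\<exists>!\<eta>. A (adjoint A \<eta>) + \<alpha> *\<^sub>R \<eta> = \<xi>"
    by blast
  then show ?thesis
    unfolding eta_reg_def by (rule theI')
qed

lemma inner_eta_reg:
  fixes A :: "'a::{real_inner,complete_space} \<Rightarrow> 'b::{real_inner,complete_space}"
  assumes "bounded_linear A" and "\<alpha> > 0"
  shows "\<xi> \<bullet> x = adjoint A (eta_reg A \<xi> \<alpha>) \<bullet> adjoint A x + \<alpha> * (eta_reg A \<xi> \<alpha> \<bullet> x)"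
proof -
  have "\<xi> \<bullet> x = (A (adjoint A (eta_reg A \<xi> \<alpha>)) + \<alpha> *\<^sub>R eta_reg A \<xi> \<alpha>) \<bullet> x"
    by (simp only: eta_reg_eq[OF assms])
  then show ?thesis
    by (simp add: inner_add_left adjoint_works_complete[OF assms(1)])
qed

lemma inner_eta_reg_self:
  fixes A :: "'a::{real_inner,complete_space} \<Rightarrow> 'b::{real_inner,complete_space}"
  assumes "bounded_linear A" and "\<alpha> > 0"
  shows "\<xi> \<bullet> eta_reg A \<xi> \<alpha> = (norm (adjoint A (eta_reg A \<xi> \<alpha>)))\<^sup>2 + \<alpha> * (norm (eta_reg A \<xi> \<alpha>))\<^sup>2"
  using inner_eta_reg[OF assms, of \<xi> "eta_reg A \<xi> \<alpha>"] by (simp add: power2_norm_eq_inner)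

lemma norm_adjoint_eta_reg_le:
  fixes A :: "'a::{real_inner,complete_space} \<Rightarrow> 'b::{real_inner,complete_space}"
  assumes "bounded_linear A" and "\<alpha> > 0"
  shows "(norm (adjoint A (eta_reg A \<xi> \<alpha>)))\<^sup>2 \<le> \<xi> \<bullet> eta_reg A \<xi> \<alpha>"
  using inner_eta_reg_self[OF assms] \<open>\<alpha> > 0\<close> by simp

lemma norm_scaleR_eta_reg_le:
  fixes A :: "'a::{real_inner,complete_space} \<Rightarrow> 'b::{real_inner,complete_space}"
  assumes "bounded_linear A" and "\<alpha> > 0"
  shows "(norm (\<alpha> *\<^sub>R eta_reg A \<xi> \<alpha>))\<^sup>2 \<le> \<alpha> * (\<xi> \<bullet> eta_reg A \<xi> \<alpha>)"
  using inner_eta_reg_self[OF assms] \<open>\<alpha> > 0\<close> by (simp add: power_mult_distrib power2_eq_square)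

lemma inner_eta_reg_pos:
  fixes A :: "'a::{real_inner,complete_space} \<Rightarrow> 'b::{real_inner,complete_space}"
  assumes "bounded_linear A" and "\<alpha> > 0" and "\<xi> \<noteq> 0"
  shows "\<xi> \<bullet> eta_reg A \<xi> \<alpha> > 0"
proof -
  interpret A: bounded_linear A by fact
  interpret A': bounded_linear "adjoint A"
    using assms(1) by (rule bounded_linear_adjoint_complete)
  have "eta_reg A \<xi> \<alpha> \<noteq> 0"
  proof
    assume "eta_reg A \<xi> \<alpha> = 0"
    then have "\<xi> = 0"
      using eta_reg_eq[OF assms(1,2), of \<xi>] by simp
    with \<open>\<xi> \<noteq> 0\<close> show False ..
  qed
  then show ?thesis
    using inner_eta_reg_self[OF assms(1,2)] \<open>\<alpha> > 0\<close> by (simp add: add_nonneg_pos)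
qed

lemma norm_adjoint_eta_reg_diff_le:
  fixes A :: "'a::{real_inner,complete_space} \<Rightarrow> 'b::{real_inner,complete_space}"
  assumes "bounded_linear A" and "0 < \<alpha>" and "\<alpha> \<le> \<beta>"
  shows "(norm (adjoint A (eta_reg A \<xi> \<alpha>) - adjoint A (eta_reg A \<xi> \<beta>)))\<^sup>2
    \<le> \<xi> \<bullet> eta_reg A \<xi> \<alpha> - \<xi> \<bullet> eta_reg A \<xi> \<beta>"
proof -
  define \<eta> \<zeta> where "\<eta> = eta_reg A \<xi> \<alpha>" and "\<zeta> = eta_reg A \<xi> \<beta>"
  define v w where "v = adjoint A \<eta>" and "w = adjoint A \<zeta>"
  have "\<beta> > 0"
    using assms by simp
  have f\<alpha>: "\<xi> \<bullet> \<eta> = v \<bullet> v + \<alpha> * (\<eta> \<bullet> \<eta>)"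
    and cross: "\<xi> \<bullet> \<zeta> = v \<bullet> w + \<alpha> * (\<eta> \<bullet> \<zeta>)"
    unfolding \<eta>_def v_def w_def by (rule inner_eta_reg[OF assms(1) \<open>\<alpha> > 0\<close>])+
  have f\<beta>: "\<xi> \<bullet> \<zeta> = w \<bullet> w + \<beta> * (\<zeta> \<bullet> \<zeta>)"
    unfolding \<zeta>_def w_def by (rule inner_eta_reg[OF assms(1) \<open>\<beta> > 0\<close>])
  have "0 \<le> \<alpha> * ((\<eta> - \<zeta>) \<bullet> (\<eta> - \<zeta>))"
    using \<open>\<alpha> > 0\<close> by simp
  also have "\<dots> = \<alpha> * (\<eta> \<bullet> \<eta>) - 2 * (\<alpha> * (\<eta> \<bullet> \<zeta>)) + \<alpha> * (\<zeta> \<bullet> \<zeta>)"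
    by (simp add: inner_commute algebra_simps)
  finally have "0 \<le> \<alpha> * (\<eta> \<bullet> \<eta>) - 2 * (\<alpha> * (\<eta> \<bullet> \<zeta>)) + \<alpha> * (\<zeta> \<bullet> \<zeta>)" .
  moreover have "\<alpha> * (\<zeta> \<bullet> \<zeta>) \<le> \<beta> * (\<zeta> \<bullet> \<zeta>)"
    using assms by (simp add: mult_right_mono)
  moreover have "(norm (v - w))\<^sup>2 = v \<bullet> v - 2 * (v \<bullet> w) + w \<bullet> w"
    by (simp add: power2_norm_eq_inner inner_diff inner_commute)
  ultimately have "(norm (v - w))\<^sup>2 \<le> \<xi> \<bullet> \<eta> - \<xi> \<bullet> \<zeta>"
    using f\<alpha> f\<beta> cross by linarith
  then show ?thesis
    by (simp only: \<eta>_def \<zeta>_def v_def w_def)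
qed

lemma inner_eta_reg_antimono:
  fixes A :: "'a::{real_inner,complete_space} \<Rightarrow> 'b::{real_inner,complete_space}"
  assumes "bounded_linear A" and "0 < \<alpha>" and "\<alpha> \<le> \<beta>"
  shows "\<xi> \<bullet> eta_reg A \<xi> \<beta> \<le> \<xi> \<bullet> eta_reg A \<xi> \<alpha>"
  using order_trans[OF zero_le_power2 norm_adjoint_eta_reg_diff_le[OF assms, of \<xi>]] by simp

lemma scaleR_eta_reg_tendsto_0:
  fixes A :: "'a::{real_inner,complete_space} \<Rightarrow> 'b::{real_inner,complete_space}"
  assumes "bounded_linear A" and bound: "\<And>\<alpha>. \<alpha> > 0 \<Longrightarrow> \<xi> \<bullet> eta_reg A \<xi> \<alpha> \<le> Z"
  shows "((\<lambda>\<alpha>. \<alpha> *\<^sub>R eta_reg A \<xi> \<alpha>) \<longlongrightarrow> 0) (at_right 0)"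
proof (rule Lim_null_comparison)
  show "\<forall>\<^sub>F \<alpha> in at_right 0. norm (\<alpha> *\<^sub>R eta_reg A \<xi> \<alpha>) \<le> sqrt (\<alpha> * Z)"
    using eventually_at_right_less[of 0]
  proof eventually_elim
    case (elim \<alpha>)
    have "(norm (\<alpha> *\<^sub>R eta_reg A \<xi> \<alpha>))\<^sup>2 \<le> \<alpha> * (\<xi> \<bullet> eta_reg A \<xi> \<alpha>)"
      using assms(1) elim by (rule norm_scaleR_eta_reg_le)
    also have "\<dots> \<le> \<alpha> * Z"
      using bound[OF elim] elim by simp
    finally show ?case
      by (rule real_le_rsqrt)
  qed
  show "((\<lambda>\<alpha>. sqrt (\<alpha> * Z)) \<longlongrightarrow> 0) (at_right 0)"
    using tendsto_real_sqrt[OF tendsto_mult[OF tendsto_ident_at[of 0 "{0<..}"] tendsto_const[of Z]]]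
    by simp
qed

lemma inner_eta_reg_bounded_imp_in_range:
  fixes A :: "'a::{real_inner,complete_space} \<Rightarrow> 'b::{real_inner,complete_space}"
  assumes "bounded_linear A" and bound: "\<And>\<alpha>. \<alpha> > 0 \<Longrightarrow> \<xi> \<bullet> eta_reg A \<xi> \<alpha> \<le> Z"
  shows "\<xi> \<in> range A"
proof -
  interpret A: bounded_linear A by fact
  define s :: "nat \<Rightarrow> real" where "s n = 1 / real (Suc n)" for n
  define g where "g n = \<xi> \<bullet> eta_reg A \<xi> (s n)" for n
  define w where "w n = adjoint A (eta_reg A \<xi> (s n))" for n
  have s_pos: "s n > 0" for n
    by (simp add: s_def)
  have s_anti: "s n \<le> s m" if "m \<le> n" for m n
    using that by (simp add: s_def frac_le)
  have "incseq g"
    unfolding incseq_def g_def using inner_eta_reg_antimono[OF assms(1) s_pos s_anti] by blast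
  moreover have "bdd_above (range g)"
    using bound s_pos by (intro bdd_aboveI[of _ Z]) (auto simp: g_def)
  ultimately have g_lim: "g \<longlonglongrightarrow> (SUP n. g n)" and g_le: "g n \<le> (SUP n. g n)" for n
    by (auto intro: LIMSEQ_incseq_SUP cSUP_upper)
  have "Cauchy w"
  proof (rule Cauchy_if_dist_sq_le_null)
    show "(dist (w m) (w n))\<^sup>2 \<le> (SUP n. g n) - g m" if "m \<le> n" for m n
      using norm_adjoint_eta_reg_diff_le[OF assms(1) s_pos s_anti[OF that], of \<xi>] g_le[of n]
      by (simp add: dist_norm norm_minus_commute g_def w_def)
    show "(\<lambda>m. (SUP n. g n) - g m) \<longlonglongrightarrow> 0"
      using tendsto_diff[OF tendsto_const g_lim, of "SUP n. g n"] by simp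
  qed
  then obtain z where "w \<longlonglongrightarrow> z"
    using Cauchy_convergent_iff convergent_def by blast
  then have "(\<lambda>n. A (w n)) \<longlonglongrightarrow> A z"
    by (rule A.tendsto)
  moreover have "(\<lambda>n. A (w n)) \<longlonglongrightarrow> \<xi>"
  proof -
    have s_lim: "filterlim s (at_right 0) sequentially"
      unfolding s_def by real_asymp
    have "(\<lambda>n. s n *\<^sub>R eta_reg A \<xi> (s n)) \<longlonglongrightarrow> 0"
      using filterlim_compose[OF scaleR_eta_reg_tendsto_0[OF assms] s_lim] by simp
    then have "(\<lambda>n. \<xi> - s n *\<^sub>R eta_reg A \<xi> (s n)) \<longlonglongrightarrow> \<xi>"
      using tendsto_diff[OF tendsto_const, of _ 0 sequentially \<xi>] by simp
    moreover have "\<xi> - s n *\<^sub>R eta_reg A \<xi> (s n) = A (w n)" for n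
      using eta_reg_eq[OF assms(1) s_pos, of \<xi> n] by (simp add: w_def algebra_simps)
    ultimately show ?thesis
      by simp
  qed
  ultimately have "\<xi> = A z"
    using LIMSEQ_unique by blast
  then show ?thesis
    by simp
qed

lemma inner_eta_reg_tendsto_at_top:
  fixes A :: "'a::{real_inner,complete_space} \<Rightarrow> 'b::{real_inner,complete_space}"
  assumes "bounded_linear A" and "\<xi> \<notin> range A"
  shows "filterlim (\<lambda>\<alpha>. \<xi> \<bullet> eta_reg A \<xi> \<alpha>) at_top (at_right 0)"
  unfolding filterlim_at_top eventually_at_right_field
proof
  fix Z
  obtain \<beta> where "\<beta> > 0" and "Z < \<xi> \<bullet> eta_reg A \<xi> \<beta>"
    using inner_eta_reg_bounded_imp_in_range[OF assms(1), of \<xi> Z] assms(2) by (meson not_le)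
  then show "\<exists>b>0. \<forall>\<alpha>>0. \<alpha> < b \<longrightarrow> Z \<le> \<xi> \<bullet> eta_reg A \<xi> \<alpha>"
    using inner_eta_reg_antimono[OF assms(1)] by (meson less_imp_le order.trans)
qed

lemma norm_adjoint_xi_reg:
  fixes B :: "'c::{real_inner,complete_space} \<Rightarrow> 'b::real_inner"
  assumes "bounded_linear B"
  shows "norm (adjoint B (xi_reg A \<xi> \<alpha>))
    = norm (adjoint B (eta_reg A \<xi> \<alpha>)) / \<bar>(\<xi> \<bullet> eta_reg A \<xi> \<alpha>) powr (3/4)\<bar>"
proof -
  interpret B': bounded_linear "adjoint B"
    using assms by (rule bounded_linear_adjoint_complete)
  show ?thesis
    by (simp add: xi_reg_def B'.scaleR field_simps)
qed

lemma norm_adjoint_xi_reg_le: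
  fixes A :: "'a::{real_inner,complete_space} \<Rightarrow> 'b::{real_inner,complete_space}"
  assumes "bounded_linear A" and "\<alpha> > 0" and "\<xi> \<noteq> 0"
  shows "norm (adjoint A (xi_reg A \<xi> \<alpha>)) \<le> (\<xi> \<bullet> eta_reg A \<xi> \<alpha>) powr (-1/4)"
proof -
  define f where "f = \<xi> \<bullet> eta_reg A \<xi> \<alpha>"
  have "f > 0"
    unfolding f_def using inner_eta_reg_pos[OF assms] .
  have "norm (adjoint A (eta_reg A \<xi> \<alpha>)) \<le> sqrt f"
    unfolding f_def using norm_adjoint_eta_reg_le[OF assms(1,2)] by (rule real_le_rsqrt)
  then have "norm (adjoint A (xi_reg A \<xi> \<alpha>)) \<le> f powr (1/2) / f powr (3/4)"
    using \<open>f > 0\<close> by (simp add: norm_adjoint_xi_reg[OF assms(1)] f_def powr_half_sqrt divide_right_mono)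
  also have "\<dots> = f powr (-1/4)"
    by (simp flip: powr_diff)
  finally show ?thesis
    by (simp add: f_def)
qed

lemma norm_adjoint_xi_reg_ge:
  fixes B :: "'c::{real_inner,complete_space} \<Rightarrow> 'b::real_inner"
  assumes "bounded_linear B" and "\<xi> = B y" and "y \<noteq> 0" and pos: "\<xi> \<bullet> eta_reg A \<xi> \<alpha> > 0"
  shows "(\<xi> \<bullet> eta_reg A \<xi> \<alpha>) powr (1/4) / norm y \<le> norm (adjoint B (xi_reg A \<xi> \<alpha>))"
proof -
  define f where "f = \<xi> \<bullet> eta_reg A \<xi> \<alpha>"
  have "f = y \<bullet> adjoint B (eta_reg A \<xi> \<alpha>)"
    by (simp add: f_def \<open>\<xi> = B y\<close> adjoint_works_complete[OF assms(1)])
  also have "\<dots> \<le> norm y * norm (adjoint B (eta_reg A \<xi> \<alpha>))"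
    by (rule norm_cauchy_schwarz)
  finally have bound: "f / norm y \<le> norm (adjoint B (eta_reg A \<xi> \<alpha>))"
    using \<open>y \<noteq> 0\<close> by (simp add: divide_le_eq mult.commute)
  have "f / f powr (3/4) = f powr (1/4)"
    using pos powr_diff[of f 1 "3/4"] by (simp add: f_def)
  then have "f powr (1/4) / norm y = (f / norm y) / f powr (3/4)"
    by (metis divide_divide_eq_left mult.commute)
  also have "\<dots> \<le> norm (adjoint B (eta_reg A \<xi> \<alpha>)) / f powr (3/4)"
    using bound by (rule divide_right_mono) simp
  also have "\<dots> = norm (adjoint B (xi_reg A \<xi> \<alpha>))"
    by (simp add: norm_adjoint_xi_reg[OF assms(1)] f_def)
  finally show ?thesis
    by (simp only: f_def)
qed

lemma adjoint_xi_reg_tendsto_0: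
  fixes A :: "'a::{real_inner,complete_space} \<Rightarrow> 'b::{real_inner,complete_space}"
  assumes "bounded_linear A" and "\<xi> \<notin> range A"
  shows "((\<lambda>\<alpha>. adjoint A (xi_reg A \<xi> \<alpha>)) \<longlongrightarrow> 0) (at_right 0)"
proof (rule Lim_null_comparison)
  interpret A: bounded_linear A by fact
  have "\<xi> \<noteq> 0"
    using assms(2) A.zero by (metis rangeI)
  show "\<forall>\<^sub>F \<alpha> in at_right 0. norm (adjoint A (xi_reg A \<xi> \<alpha>)) \<le> (\<xi> \<bullet> eta_reg A \<xi> \<alpha>) powr (-1/4)"
    using eventually_at_right_less[of 0]
    by eventually_elim (rule norm_adjoint_xi_reg_le[OF assms(1) _ \<open>\<xi> \<noteq> 0\<close>])
  show "((\<lambda>\<alpha>. (\<xi> \<bullet> eta_reg A \<xi> \<alpha>) powr (-1/4)) \<longlongrightarrow> 0) (at_right 0)"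
    using inner_eta_reg_tendsto_at_top[OF assms] by (rule tendsto_neg_powr[rotated]) simp
qed

lemma norm_adjoint_xi_reg_tendsto_at_top:
  fixes B :: "'c::{real_inner,complete_space} \<Rightarrow> 'b::{real_inner,complete_space}"
    and A :: "'a::{real_inner,complete_space} \<Rightarrow> 'b"
  assumes "bounded_linear B" and "bounded_linear A" and "\<xi> \<in> range B" and "\<xi> \<notin> range A"
  shows "filterlim (\<lambda>\<alpha>. norm (adjoint B (xi_reg A \<xi> \<alpha>))) at_top (at_right 0)"
proof -
  interpret A: bounded_linear A by fact
  interpret B: bounded_linear B by fact
  have "\<xi> \<noteq> 0"
    using assms(4) A.zero by (metis rangeI)
  obtain y where "\<xi> = B y"
    using assms(3) by blast
  with \<open>\<xi> \<noteq> 0\<close> have "y \<noteq> 0"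
    using B.zero by auto
  have "filterlim (\<lambda>\<alpha>. (\<xi> \<bullet> eta_reg A \<xi> \<alpha>) powr (1/4) / norm y) at_top (at_right 0)"
    unfolding divide_inverse using \<open>y \<noteq> 0\<close>
    by (intro filterlim_at_top_mult_tendsto_pos[OF tendsto_const]
        filterlim_compose[OF real_powr_at_top inner_eta_reg_tendsto_at_top[OF assms(2,4)]]) auto
  moreover have "\<forall>\<^sub>F \<alpha> in at_right 0.
      (\<xi> \<bullet> eta_reg A \<xi> \<alpha>) powr (1/4) / norm y \<le> norm (adjoint B (xi_reg A \<xi> \<alpha>))"
    using eventually_at_right_less[of 0]
  proof eventually_elim
    case (elim \<alpha>)
    then have "\<xi> \<bullet> eta_reg A \<xi> \<alpha> > 0"
      using inner_eta_reg_pos[OF assms(2) _ \<open>\<xi> \<noteq> 0\<close>] by blast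
    then show ?case
      by (rule norm_adjoint_xi_reg_ge[OF assms(1) \<open>\<xi> = B y\<close> \<open>y \<noteq> 0\<close>])
  qed
  ultimately show ?thesis
    by (rule filterlim_at_top_mono)
qed

theorem lemmaA2:
  fixes A1 :: "'y1::{real_inner, complete_space} \<Rightarrow> 'x::{real_inner, complete_space}"
    and A2 :: "'y2::{real_inner, complete_space} \<Rightarrow> 'x"
    and \<xi> :: 'x
  assumes "bounded_linear A1" and "bounded_linear A2"
    and "\<xi> \<in> range A1" and "\<xi> \<notin> range A2"
  shows "(\<forall>\<alpha>>0. \<xi> \<bullet> eta_reg A2 \<xi> \<alpha> > 0)
    \<and> filterlim (\<lambda>\<alpha>. norm (adjoint A1 (xi_reg A2 \<xi> \<alpha>))) at_top (at_right 0)
    \<and> ((\<lambda>\<alpha>. adjoint A2 (xi_reg A2 \<xi> \<alpha>)) \<longlongrightarrow> 0) (at_right 0)"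
proof -
  interpret A2: bounded_linear A2 by fact
  have "\<xi> \<noteq> 0"
    using assms(4) A2.zero by (metis rangeI)
  then have "\<forall>\<alpha>>0. \<xi> \<bullet> eta_reg A2 \<xi> \<alpha> > 0"
    using inner_eta_reg_pos[OF assms(2)] by blast
  then show ?thesis
    using norm_adjoint_xi_reg_tendsto_at_top[OF assms] adjoint_xi_reg_tendsto_0[OF assms(2,4)]
    by blast
qed

end
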